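(* Let $\omega\in(0,1)$, $P>0$, $A\in\mathbb{R}$, $\kappa\in(0,1)$, $T>0$. Let $f\in C([0,T],\mathcal{M}^{\mathrm{fin}}_+(\mathbb{R}))$ satisfy, for every $\psi\in C_b^1(\mathbb{R})$ and $t\in[0,T]$, $\int\psi\,f(dx,t)=\psi(A)+\int_0^t\int_{\mathbb{R}}\int_0^\infty\frac{P}{y^{1+\omega}}[\psi(x-y)-\psi(x)]\,dy\,f(dx,s)\,ds$, with $\operatorname{supp}f(\cdot,t)\subset(-\infty,A]$ and $f(\mathbb{R},t)=1$ for all $t$, and let $G(\cdot,t):=f(\cdot,t)\ast\varphi_\kappa$, which solves $\partial_tG(x,t)=P\int_0^\infty z^{-1-\omega}[G(x+z,t)-G(x,t)]\,dz$ with $G(\cdot,0)=\varphi_\kappa(\cdot-A)$. Then for any $\mu\in(0,1)$ there are constants $C,C_\mu,C_\omega$ (depending only on $\mu,\omega$) such that for all $t\in[0,T]$: (1) $\int_{-\infty}^{A-D}G(x,t)\,dx\le C\big(\frac{\kappa}{D}\big)^\mu+C\frac{Pt}{D^\omega}$ for all $D>0$; (2) $\int_{A-2}^A|x-A|\,G(x,t)\,dx\le C_\mu\kappa^\mu+C_\omega Pt$.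
   Context: $\varphi_\kappa$ denotes a non-negative, symmetric standard mollifier with $\operatorname{supp}\varphi_\kappa\subset[-\kappa,\kappa]$ and $\int\varphi_\kappa=1$. $\mathcal{M}^{\mathrm{fin}}_+(\mathbb{R})$ is the space of non-negative finite measures on $\mathbb{R}$; $C_b^1(\mathbb{R})$ denotes bounded $C^1$ functions with bounded derivative. *)

theory Defs
  imports "HOL-Analysis.Analysis"
begin

definition Cb1 :: "(real \<Rightarrow> real) \<Rightarrow> bool" where
  "Cb1 \<psi> \<longleftrightarrow> (\<exists>\<psi>'. (\<forall>x. (\<psi> has_real_derivative \<psi>' x) (at x))
      \<and> continuous_on UNIV \<psi>' \<and> bounded (range \<psi>) \<and> bounded (range \<psi>'))"

definition Cb :: "(real \<Rightarrow> real) \<Rightarrow> bool" where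
  "Cb \<psi> \<longleftrightarrow> continuous_on UNIV \<psi> \<and> bounded (range \<psi>)"

definition mollifier :: "real \<Rightarrow> (real \<Rightarrow> real) \<Rightarrow> bool" where
  "mollifier \<kappa> \<phi> \<longleftrightarrow> (\<forall>n x. (deriv ^^ n) \<phi> differentiable (at x))
      \<and> (\<forall>x. 0 \<le> \<phi> x) \<and> (\<forall>x. \<phi> (-x) = \<phi> x)
      \<and> (\<forall>x. \<bar>x\<bar> > \<kappa> \<longrightarrow> \<phi> x = 0)
      \<and> integrable lborel \<phi> \<and> (\<integral>x. \<phi> x \<partial>lborel) = 1"

definition conv_meas :: "real measure \<Rightarrow> (real \<Rightarrow> real) \<Rightarrow> real \<Rightarrow> real" where
  "conv_meas M \<phi> x = (\<integral>y. \<phi> (x - y) \<partial>M)"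

end

theory Submission
  imports Defs
begin

text \<open>The test function \<open>\<psi>\<^sub>D(x) = arctan ((A - x) / D)\<close> is \<open>1/D\<close>-Lipschitz and has
oscillation below \<open>\<pi>\<close>. Splitting the jump integral at \<open>y = D\<close> therefore bounds the generator
applied to \<open>\<psi>\<^sub>D\<close> by a multiple of \<open>P / D\<^sup>\<omega>\<close>, and as \<open>\<psi>\<^sub>D(A) = 0\<close> the weak formulation
gives \<open>\<integral> \<psi>\<^sub>D df(t) \<lesssim> P t / D\<^sup>\<omega>\<close>. Since \<open>\<psi>\<^sub>D \<ge> \<pi>/4\<close> on \<open>(-\<infinity>, A - D]\<close> and \<open>f(t)\<close> lives on
\<open>(-\<infinity>, A]\<close>, this bounds the mass of \<open>f(t)\<close> far to the left of \<open>A\<close>. Mollification moves mass by at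
most \<open>\<kappa>\<close>, which is harmless for \<open>D \<ge> 2\<kappa>\<close> and absorbed by \<open>(\<kappa>/D)\<^sup>\<mu>\<close> otherwise. The first
moment near \<open>A\<close> follows from the case \<open>D = 1\<close> together with \<open>u \<le> 10 arctan u\<close> on \<open>[0, 3]\<close>.\<close>

lemma abs_arctan_diff_le: "\<bar>arctan a - arctan b\<bar> \<le> \<bar>a - b\<bar>"
proof -
  have le: "arctan q - arctan p \<le> q - p" if "p < q" for p q
  proof -
    obtain z where "arctan q - arctan p = (q - p) * inverse (1 + z\<^sup>2)"
      using MVT2[OF \<open>p < q\<close>, of arctan "\<lambda>z. inverse (1 + z\<^sup>2)"] DERIV_arctan by blast
    moreover have "inverse (1 + z\<^sup>2) \<le> 1"
      by (simp add: inverse_le_1_iff add_pos_nonneg)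
    ultimately show ?thesis using that by (simp add: mult_left_le)
  qed
  show ?thesis
    using le[of a b] le[of b a] arctan_monotone[of a b] arctan_monotone[of b a]
    by (cases a b rule: linorder_cases) auto
qed

lemma le_one_plus_square_mult_arctan:
  assumes "0 \<le> u"
  shows "u \<le> (1 + u\<^sup>2) * arctan u"
proof (cases "u = 0")
  case False
  then have u: "0 < u" using assms by simp
  define g where "g = (\<lambda>u. (1 + u\<^sup>2) * arctan u - u)"
  have "DERIV g z :> 2 * z * arctan z" for z
    unfolding g_def
    apply (rule derivative_eq_intros DERIV_arctan refl | simp)+
    using zero_le_square[of z] by (simp add: field_simps power2_eq_square add_nonneg_eq_0_iff)
  then obtain z where "0 < z" "g u - g 0 = (u - 0) * (2 * z * arctan z)"
    using MVT2[OF u, of g "\<lambda>z. 2 * z * arctan z"] by blast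
  then have "0 \<le> g u - g 0" using u by simp
  then show ?thesis by (simp add: g_def)
qed simp

lemma le_ten_mult_arctan:
  assumes "0 \<le> u" "u \<le> 3"
  shows "u \<le> 10 * arctan u"
proof -
  have "u \<le> (1 + u\<^sup>2) * arctan u"
    using le_one_plus_square_mult_arctan[OF assms(1)] .
  also have "\<dots> \<le> 10 * arctan u"
  proof (rule mult_right_mono)
    have "u\<^sup>2 \<le> 3\<^sup>2" using assms by (intro power_mono) auto
    then show "1 + u\<^sup>2 \<le> 10" by simp
  qed (use assms in simp)
  finally show ?thesis .
qed

lemma Cb1_arctan_affine:
  assumes "0 < D"
  shows "Cb1 (\<lambda>x. arctan ((A - x) / D))"
  unfolding Cb1_def
proof (intro exI conjI allI)
  let ?d = "\<lambda>x. inverse (1 + ((A - x) / D)\<^sup>2) * (- 1 / D)"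
  show "((\<lambda>x. arctan ((A - x) / D)) has_real_derivative ?d x) (at x)" for x
    using assms by (auto intro!: derivative_eq_intros)
  show "continuous_on UNIV ?d"
    using assms by (intro continuous_intros) (auto simp: add_nonneg_eq_0_iff)
  have "\<bar>arctan ((A - x) / D)\<bar> \<le> pi" for x
    using arctan_bounded[of "(A - x) / D"] by linarith
  then show "bounded (range (\<lambda>x. arctan ((A - x) / D)))"
    unfolding bounded_real by blast
  have "\<bar>?d x\<bar> \<le> 1 / D" for x
  proof -
    have "inverse (1 + ((A - x) / D)\<^sup>2) \<le> 1" by (simp add: inverse_le_1_iff add_pos_nonneg)
    moreover have "0 \<le> inverse (1 + ((A - x) / D)\<^sup>2)" by (simp add: add_pos_nonneg)
    ultimately show ?thesis using assms by (simp add: abs_mult divide_right_mono)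
  qed
  then show "bounded (range ?d)"
    unfolding bounded_real by blast
qed

lemma nn_integral_powr_Icc_0:
  assumes "-1 < a" "0 \<le> c"
  shows "(\<integral>\<^sup>+y. ennreal (indicator {0..c} y * y powr a) \<partial>lborel) = ennreal (c powr (a + 1) / (a + 1))"
  using nn_integral_has_integral_lebesgue[OF _ has_integral_powr_from_0[OF assms]]
  by (simp add: nn_integral_set_ennreal)

lemma nn_integral_powr_Ici:
  assumes "a < -1" "0 < c"
  shows "(\<integral>\<^sup>+y. ennreal (indicator {c..} y * y powr a) \<partial>lborel) = ennreal (- (c powr (a + 1)) / (a + 1))"
  using nn_integral_has_integral_lebesgue[OF _ has_integral_powr_to_inf[OF assms]]
  by (simp add: nn_integral_set_ennreal)

lemma abs_integral_le_const:
  fixes g :: "'a \<Rightarrow> real"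
  assumes "emeasure M (space M) = 1" "AE x in M. \<bar>g x\<bar> \<le> B"
  shows "\<bar>\<integral>x. g x \<partial>M\<bar> \<le> B"
proof -
  have "\<bar>\<integral>x. g x \<partial>M\<bar> \<le> (\<integral>x. \<bar>g x\<bar> \<partial>M)"
    by (rule integral_abs_bound)
  also have "\<dots> \<le> (\<integral>x. B \<partial>M)"
  proof (rule integral_mono_AE')
    show "integrable M (\<lambda>x. B)"
      using assms(1) by (intro finite_measure.integrable_const finite_measureI) simp
  qed (use assms(2) in \<open>auto elim: eventually_mono\<close>)
  finally show ?thesis using assms(1) by (simp add: measure_def)
qed

lemma abs_interval_integral_le:
  fixes H :: "real \<Rightarrow> real"
  assumes "0 \<le> t" and bound: "\<And>s. s \<in> {0..t} \<Longrightarrow> \<bar>H s\<bar> \<le> B"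
  shows "\<bar>LBINT s=0..t. H s\<bar> \<le> B * t"
proof -
  have "0 \<le> B" using bound[of 0] assms by force
  have "\<bar>LBINT s=0..t. H s\<bar> = \<bar>\<integral>s. indicator {0..t} s * H s \<partial>lborel\<bar>"
    using interval_integral_Icc[of 0 t H] assms by (simp add: zero_ereal_def set_lebesgue_integral_def)
  also have "\<dots> \<le> (\<integral>s. \<bar>indicator {0..t} s * H s\<bar> \<partial>lborel)"
    by (rule integral_abs_bound)
  also have "\<dots> \<le> (\<integral>s. B * indicator {0..t} s \<partial>lborel)"
  proof (rule integral_mono_AE')
    show "integrable lborel (\<lambda>s. B * indicator {0..t} s)"
      by (intro integrable_mult_right integrable_real_indicator) (auto simp: emeasure_lborel_Icc_eq less_top[symmetric])
  qed (use bound \<open>0 \<le> B\<close> in \<open>auto simp: indicator_def\<close>)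
  also have "\<dots> = B * t" using assms by simp
  finally show ?thesis .
qed

text \<open>Majorant of the jump integrand: the Lipschitz bound is used for \<open>y \<le> D\<close>, the oscillation
bound for \<open>y \<ge> D\<close>.\<close>

definition jump_majorant :: "real \<Rightarrow> real \<Rightarrow> real \<Rightarrow> real \<Rightarrow> real \<Rightarrow> real" where
  "jump_majorant P M D \<omega> y =
    P / D * (indicator {0..D} y * y powr (-\<omega>)) + P * M * (indicator {D..} y * y powr (-1 - \<omega>))"

lemma abs_jump_integrand_le:
  fixes \<psi> :: "real \<Rightarrow> real"
  assumes "0 < D" "0 \<le> P" "0 \<le> M"
    and lip: "\<And>a b. \<bar>\<psi> a - \<psi> b\<bar> \<le> \<bar>a - b\<bar> / D"
    and osc: "\<And>a b. \<bar>\<psi> a - \<psi> b\<bar> \<le> M"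
  shows "\<bar>indicator {0<..} y * (P / y powr (1 + \<omega>) * (\<psi> (x - y) - \<psi> x))\<bar> \<le> jump_majorant P M D \<omega> y"
proof -
  have near_nonneg: "0 \<le> P / D * (indicator {0..D} y * y powr (-\<omega>))"
    and far_nonneg: "0 \<le> P * M * (indicator {D..} y * y powr (-1 - \<omega>))"
    using assms by (simp_all add: indicator_def)
  show ?thesis
  proof (cases "0 < y")
    case False
    then show ?thesis using near_nonneg far_nonneg by (simp add: jump_majorant_def)
  next
    case True
    have F: "\<bar>indicator {0<..} y * (P / y powr (1 + \<omega>) * (\<psi> (x - y) - \<psi> x))\<bar>
        = P / y powr (1 + \<omega>) * \<bar>\<psi> (x - y) - \<psi> x\<bar>"
      using True assms by (simp add: abs_mult)
    show ?thesis
    proof (cases "y \<le> D")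
      case True
      have "P / y powr (1 + \<omega>) * \<bar>\<psi> (x - y) - \<psi> x\<bar> \<le> P / y powr (1 + \<omega>) * (y / D)"
        using lip[of "x - y" x] \<open>0 < y\<close> assms by (intro mult_left_mono) auto
      also have "\<dots> = P / D * y powr (-\<omega>)"
        using \<open>0 < y\<close> assms by (simp add: powr_add powr_minus field_simps)
      also have "\<dots> \<le> jump_majorant P M D \<omega> y"
        using True \<open>0 < y\<close> far_nonneg by (simp add: jump_majorant_def)
      finally show ?thesis unfolding F .
    next
      case False
      have "P / y powr (1 + \<omega>) * \<bar>\<psi> (x - y) - \<psi> x\<bar> \<le> P / y powr (1 + \<omega>) * M"
        using osc \<open>0 < y\<close> assms by (intro mult_left_mono) auto
      also have "\<dots> = P * M * y powr (-1 - \<omega>)"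
        using powr_minus_divide[of y "1 + \<omega>"] by (simp add: algebra_simps)
      also have "\<dots> \<le> jump_majorant P M D \<omega> y"
        using False \<open>0 < y\<close> near_nonneg by (simp add: jump_majorant_def)
      finally show ?thesis unfolding F .
    qed
  qed
qed

lemma nn_integral_jump_majorant:
  assumes "0 < D" "0 < \<omega>" "\<omega> < 1" "0 \<le> P" "0 \<le> M"
  shows "(\<integral>\<^sup>+y. ennreal (jump_majorant P M D \<omega> y) \<partial>lborel) = ennreal (P * (1 / (1 - \<omega>) + M / \<omega>) / D powr \<omega>)"
proof -
  let ?near = "\<lambda>y. indicator {0..D} y * y powr (-\<omega>)" and ?far = "\<lambda>y. indicator {D..} y * y powr (-1 - \<omega>)"
  have coeffs: "0 \<le> P / D" "0 \<le> P * M" "0 \<le> D powr (1 - \<omega>) / (1 - \<omega>)" "0 \<le> D powr (- \<omega>) / \<omega>"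
    using assms by simp_all
  have parts: "0 \<le> ?near y" "0 \<le> ?far y" for y by (simp_all add: indicator_def)
  have "(\<integral>\<^sup>+y. ennreal (jump_majorant P M D \<omega> y) \<partial>lborel)
      = (\<integral>\<^sup>+y. ennreal (P / D) * ennreal (?near y) + ennreal (P * M) * ennreal (?far y) \<partial>lborel)"
    using coeffs parts unfolding jump_majorant_def
    by (simp only: ennreal_plus[OF mult_nonneg_nonneg mult_nonneg_nonneg] ennreal_mult)
  also have "\<dots> = ennreal (P / D) * (\<integral>\<^sup>+y. ennreal (?near y) \<partial>lborel)
      + ennreal (P * M) * (\<integral>\<^sup>+y. ennreal (?far y) \<partial>lborel)"
    by (simp add: nn_integral_add nn_integral_cmult)
  also have "\<dots> = ennreal (P / D) * ennreal (D powr (1 - \<omega>) / (1 - \<omega>))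
      + ennreal (P * M) * ennreal (D powr (- \<omega>) / \<omega>)"
    using nn_integral_powr_Icc_0[of "-\<omega>" D] nn_integral_powr_Ici[of "-1 - \<omega>" D] assms by simp
  also have "\<dots> = ennreal (P / D * (D powr (1 - \<omega>) / (1 - \<omega>)) + P * M * (D powr (- \<omega>) / \<omega>))"
    using coeffs by (simp only: ennreal_plus[OF mult_nonneg_nonneg mult_nonneg_nonneg] ennreal_mult)
  also have "P / D * (D powr (1 - \<omega>) / (1 - \<omega>)) + P * M * (D powr (- \<omega>) / \<omega>)
      = P * (1 / (1 - \<omega>) + M / \<omega>) / D powr \<omega>"
    using assms by (simp add: powr_diff powr_minus field_simps)
  finally show ?thesis .
qed

lemma abs_jump_integral_le:
  fixes \<psi> :: "real \<Rightarrow> real"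
  assumes "0 < D" "0 < \<omega>" "\<omega> < 1" "0 \<le> P" "0 \<le> M"
    and lip: "\<And>a b. \<bar>\<psi> a - \<psi> b\<bar> \<le> \<bar>a - b\<bar> / D"
    and osc: "\<And>a b. \<bar>\<psi> a - \<psi> b\<bar> \<le> M"
  shows "\<bar>LBINT y:{0<..}. P / y powr (1 + \<omega>) * (\<psi> (x - y) - \<psi> x)\<bar>
           \<le> P * (1 / (1 - \<omega>) + M / \<omega>) / D powr \<omega>"
proof -
  let ?F = "\<lambda>y. indicator {0<..} y * (P / y powr (1 + \<omega>) * (\<psi> (x - y) - \<psi> x))"
  have "\<bar>LBINT y:{0<..}. P / y powr (1 + \<omega>) * (\<psi> (x - y) - \<psi> x)\<bar> = \<bar>\<integral>y. ?F y \<partial>lborel\<bar>"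
    by (simp add: set_lebesgue_integral_def)
  also have "\<dots> \<le> (\<integral>y. \<bar>?F y\<bar> \<partial>lborel)"
    by (rule integral_abs_bound)
  also have "\<dots> \<le> P * (1 / (1 - \<omega>) + M / \<omega>) / D powr \<omega>"
  proof (rule integral_real_bounded)
    show "0 \<le> P * (1 / (1 - \<omega>) + M / \<omega>) / D powr \<omega>" using assms by simp
    show "(\<integral>\<^sup>+y. ennreal \<bar>?F y\<bar> \<partial>lborel) \<le> ennreal (P * (1 / (1 - \<omega>) + M / \<omega>) / D powr \<omega>)"
      unfolding nn_integral_jump_majorant[OF assms(1-5), symmetric]
      using abs_jump_integrand_le[OF \<open>0 < D\<close> \<open>0 \<le> P\<close> \<open>0 \<le> M\<close> lip osc]
      by (intro nn_integral_mono ennreal_leI)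
  qed
  finally show ?thesis .
qed

lemma arctan_moment_le:
  fixes f :: "real \<Rightarrow> real measure"
  assumes "0 < \<omega>" "\<omega> < 1" "0 \<le> P" "0 < D" "t \<in> {0..T}"
    and sets_f: "\<And>s. s \<in> {0..T} \<Longrightarrow> sets (f s) = sets borel"
    and prob_f: "\<And>s. s \<in> {0..T} \<Longrightarrow> emeasure (f s) UNIV = 1"
    and weak: "\<And>\<psi> s. Cb1 \<psi> \<Longrightarrow> s \<in> {0..T} \<Longrightarrow>
      (\<integral>x. \<psi> x \<partial>f s) = \<psi> A +
        (LBINT r=0..s. (\<integral>x. (LBINT y:{0<..}. P / y powr (1 + \<omega>) * (\<psi> (x - y) - \<psi> x)) \<partial>f r))"
  shows "(\<integral>x. arctan ((A - x) / D) \<partial>f t) \<le> P * (1 / (1 - \<omega>) + pi / \<omega>) / D powr \<omega> * t"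
proof -
  define \<psi> where "\<psi> x = arctan ((A - x) / D)" for x
  define B where "B = P * (1 / (1 - \<omega>) + pi / \<omega>) / D powr \<omega>"
  have lip: "\<bar>\<psi> a - \<psi> b\<bar> \<le> \<bar>a - b\<bar> / D" for a b
  proof -
    have "\<bar>\<psi> a - \<psi> b\<bar> \<le> \<bar>(A - a) / D - (A - b) / D\<bar>"
      unfolding \<psi>_def by (rule abs_arctan_diff_le)
    also have "\<dots> = \<bar>a - b\<bar> / D"
      using \<open>0 < D\<close> by (simp add: diff_divide_distrib[symmetric] abs_minus_commute)
    finally show ?thesis .
  qed
  have osc: "\<bar>\<psi> a - \<psi> b\<bar> \<le> pi" for a b
    using arctan_bounded[of "(A - a) / D"] arctan_bounded[of "(A - b) / D"] unfolding \<psi>_def by linarith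
  have "\<bar>LBINT r=0..t. (\<integral>x. (LBINT y:{0<..}. P / y powr (1 + \<omega>) * (\<psi> (x - y) - \<psi> x)) \<partial>f r)\<bar> \<le> B * t"
  proof (rule abs_interval_integral_le)
    show "0 \<le> t" using \<open>t \<in> {0..T}\<close> by simp
  next
    fix r assume "r \<in> {0..t}"
    then have "r \<in> {0..T}" using \<open>t \<in> {0..T}\<close> by auto
    then have "space (f r) = UNIV" "emeasure (f r) (space (f r)) = 1"
      using sets_eq_imp_space_eq[OF sets_f] prob_f by auto
    then show "\<bar>\<integral>x. (LBINT y:{0<..}. P / y powr (1 + \<omega>) * (\<psi> (x - y) - \<psi> x)) \<partial>f r\<bar> \<le> B"
      using abs_jump_integral_le[OF \<open>0 < D\<close> \<open>0 < \<omega>\<close> \<open>\<omega> < 1\<close> \<open>0 \<le> P\<close> _ lip osc]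
      by (intro abs_integral_le_const) (auto simp: B_def)
  qed
  moreover have "\<psi> A = 0" by (simp add: \<psi>_def)
  ultimately show ?thesis
    using weak[OF Cb1_arctan_affine[OF \<open>0 < D\<close>, of A] \<open>t \<in> {0..T}\<close>] unfolding \<psi>_def B_def by linarith
qed

lemma mollifier_nonneg: "mollifier \<kappa> \<phi> \<Longrightarrow> 0 \<le> \<phi> x"
  unfolding mollifier_def by blast

lemma mollifier_eq_0: "mollifier \<kappa> \<phi> \<Longrightarrow> \<kappa> < \<bar>x\<bar> \<Longrightarrow> \<phi> x = 0"
  unfolding mollifier_def by blast

lemma mollifier_borel_measurable:
  assumes "mollifier \<kappa> \<phi>"
  shows "\<phi> \<in> borel_measurable borel"
proof (rule borel_measurable_continuous_onI)
  have "\<phi> differentiable (at x)" for x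
    using assms funpow_0[of deriv \<phi>] unfolding mollifier_def by metis
  then show "continuous_on UNIV \<phi>"
    by (simp add: continuous_at_imp_continuous_on differentiable_imp_continuous_within)
qed

lemma nn_integral_mollifier_shift:
  assumes "mollifier \<kappa> \<phi>"
  shows "(\<integral>\<^sup>+x. ennreal (\<phi> (x - y)) \<partial>lborel) = 1"
proof -
  note mollifier_borel_measurable[OF assms, measurable]
  have "(\<integral>\<^sup>+x. ennreal (\<phi> (x - y)) \<partial>lborel) = (\<integral>\<^sup>+x. ennreal (\<phi> x) \<partial>lborel)"
    using nn_integral_real_affine[of "\<lambda>x. ennreal (\<phi> (x - y))" 1 y] by simp
  also have "\<dots> = ennreal (\<integral>x. \<phi> x \<partial>lborel)"
    using assms mollifier_nonneg[OF assms] unfolding mollifier_def by (intro nn_integral_eq_integral) auto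
  also have "\<dots> = 1" using assms unfolding mollifier_def by simp
  finally show ?thesis .
qed

lemma set_integral_conv_meas_le:
  fixes M :: "real measure" and \<phi> w b :: "real \<Rightarrow> real"
  assumes "finite_measure M" and sets_M: "sets M = sets borel"
    and [measurable]: "\<phi> \<in> borel_measurable borel" "w \<in> borel_measurable borel" "S \<in> sets borel"
    and \<phi>_nonneg: "\<And>x. 0 \<le> \<phi> x" and w_nonneg: "\<And>x. 0 \<le> w x"
    and "integrable M b" "AE y in M. 0 \<le> b y"
    and kernel: "AE y in M. (\<integral>\<^sup>+x. ennreal (indicator S x * w x * \<phi> (x - y)) \<partial>lborel) \<le> ennreal (b y)"
  shows "(LBINT x:S. w x * conv_meas M \<phi> x) \<le> (\<integral>y. b y \<partial>M)"
proof -
  interpret finite_measure M by fact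
  interpret pair_sigma_finite lborel M ..
  have measurable_M: "borel_measurable M = borel_measurable borel"
    by (rule measurable_cong_sets[OF sets_M refl])
  have measurable_pair: "borel_measurable (lborel \<Otimes>\<^sub>M M) = borel_measurable (lborel \<Otimes>\<^sub>M borel)"
    by (rule measurable_cong_sets[OF sets_pair_measure_cong[OF refl sets_M] refl])
  let ?k = "\<lambda>x y. indicator S x * w x * \<phi> (x - y)"
  have k_nonneg: "0 \<le> ?k x y" for x y
    using \<phi>_nonneg w_nonneg by simp
  have pointwise: "ennreal (indicator S x * (w x * conv_meas M \<phi> x)) \<le> (\<integral>\<^sup>+y. ennreal (?k x y) \<partial>M)" for x
  proof -
    have "indicator S x * (w x * conv_meas M \<phi> x) = (\<integral>y. ?k x y \<partial>M)"
      by (simp add: conv_meas_def mult.assoc)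
    also have "\<dots> = enn2real (\<integral>\<^sup>+y. ennreal (?k x y) \<partial>M)"
    proof (rule integral_eq_nn_integral)
      show "(\<lambda>y. ?k x y) \<in> borel_measurable M" unfolding measurable_M by measurable
    qed (simp add: k_nonneg)
    finally show ?thesis by (simp add: ennreal_enn2real_if)
  qed
  have "(\<integral>\<^sup>+x. ennreal (indicator S x * (w x * conv_meas M \<phi> x)) \<partial>lborel)
      \<le> (\<integral>\<^sup>+x. (\<integral>\<^sup>+y. ennreal (?k x y) \<partial>M) \<partial>lborel)"
    by (intro nn_integral_mono pointwise)
  also have "\<dots> = (\<integral>\<^sup>+y. (\<integral>\<^sup>+x. ennreal (?k x y) \<partial>lborel) \<partial>M)"
    by (rule Fubini'[symmetric]) (unfold measurable_pair, measurable)
  also have "\<dots> \<le> (\<integral>\<^sup>+y. ennreal (b y) \<partial>M)"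
    by (rule nn_integral_mono_AE[OF kernel])
  also have "\<dots> = ennreal (\<integral>y. b y \<partial>M)"
    by (rule nn_integral_eq_integral) fact+
  finally have nn_bound: "(\<integral>\<^sup>+x. ennreal (indicator S x * (w x * conv_meas M \<phi> x)) \<partial>lborel)
      \<le> ennreal (\<integral>y. b y \<partial>M)" .
  show ?thesis
    unfolding set_lebesgue_integral_def
  proof (rule integral_real_bounded)
    show "0 \<le> (\<integral>y. b y \<partial>M)" by (rule integral_nonneg_AE) fact
  qed (use nn_bound in simp)
qed

lemma nn_integral_mollifier_Iic_le:
  assumes "mollifier \<kappa> \<phi>"
  shows "(\<integral>\<^sup>+x. ennreal (indicator {..c} x * \<phi> (x - y)) \<partial>lborel) \<le> ennreal (indicator {..c + \<kappa>} y)"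
proof (cases "y \<le> c + \<kappa>")
  case True
  have "(\<integral>\<^sup>+x. ennreal (indicator {..c} x * \<phi> (x - y)) \<partial>lborel) \<le> (\<integral>\<^sup>+x. ennreal (\<phi> (x - y)) \<partial>lborel)"
    by (intro nn_integral_mono) (simp add: indicator_def)
  then show ?thesis using True nn_integral_mollifier_shift[OF assms] by simp
next
  case False
  then have "ennreal (indicator {..c} x * \<phi> (x - y)) = 0" for x
    using mollifier_eq_0[OF assms, of "x - y"] by (auto simp: indicator_def)
  then show ?thesis by simp
qed

lemma nn_integral_mollifier_moment_le:
  assumes "mollifier \<kappa> \<phi>" "0 < \<kappa>" "\<kappa> < 1" "y \<le> A"
  shows "(\<integral>\<^sup>+x. ennreal (indicator {A - 2..A} x * \<bar>x - A\<bar> * \<phi> (x - y)) \<partial>lborel)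
    \<le> ennreal (\<kappa> + 10 * arctan (A - y))"
proof (cases "A - y \<le> 3")
  case True
  have "ennreal (indicator {A - 2..A} x * \<bar>x - A\<bar> * \<phi> (x - y)) \<le> ennreal (A - y + \<kappa>) * ennreal (\<phi> (x - y))"
    for x
  proof (cases "\<phi> (x - y) = 0 \<or> x \<notin> {A - 2..A}")
    case False
    then have "\<bar>x - y\<bar> \<le> \<kappa>" "x \<le> A"
      using mollifier_eq_0[OF assms(1), of "x - y"] by force+
    then have "indicator {A - 2..A} x * \<bar>x - A\<bar> * \<phi> (x - y) \<le> (A - y + \<kappa>) * \<phi> (x - y)"
      using mollifier_nonneg[OF assms(1)] by (auto simp: indicator_def intro!: mult_right_mono)
    moreover have "ennreal ((A - y + \<kappa>) * \<phi> (x - y)) = ennreal (A - y + \<kappa>) * ennreal (\<phi> (x - y))"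
      using assms mollifier_nonneg[OF assms(1)] by (intro ennreal_mult) auto
    ultimately show ?thesis by (metis ennreal_leI)
  qed (auto simp: indicator_def)
  then have "(\<integral>\<^sup>+x. ennreal (indicator {A - 2..A} x * \<bar>x - A\<bar> * \<phi> (x - y)) \<partial>lborel)
      \<le> (\<integral>\<^sup>+x. ennreal (A - y + \<kappa>) * ennreal (\<phi> (x - y)) \<partial>lborel)"
    by (intro nn_integral_mono)
  also have "\<dots> = ennreal (A - y + \<kappa>)"
    using mollifier_borel_measurable[OF assms(1)]
    by (simp add: nn_integral_cmult nn_integral_mollifier_shift[OF assms(1)])
  also have "\<dots> \<le> ennreal (\<kappa> + 10 * arctan (A - y))"
    using le_ten_mult_arctan[of "A - y"] True assms by (intro ennreal_leI) simp
  finally show ?thesis .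
next
  case False
  \<comment> \<open>then the two factors have disjoint supports, since \<open>x \<ge> A - 2\<close> and \<open>\<kappa> < 1\<close>\<close>
  then have "ennreal (indicator {A - 2..A} x * \<bar>x - A\<bar> * \<phi> (x - y)) = 0" for x
    using assms mollifier_eq_0[OF assms(1), of "x - y"] by (auto simp: indicator_def)
  then show ?thesis by simp
qed

lemma set_integral_conv_meas_Iic_le:
  fixes M :: "real measure"
  assumes "finite_measure M" "sets M = sets borel" "mollifier \<kappa> \<phi>"
  shows "(LBINT x:{..c}. conv_meas M \<phi> x) \<le> measure M {..c + \<kappa>}"
proof -
  have "(LBINT x:{..c}. 1 * conv_meas M \<phi> x) \<le> (\<integral>y. indicator {..c + \<kappa>} y \<partial>M)"
    using assms mollifier_borel_measurable[OF assms(3)] mollifier_nonneg[OF assms(3)]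
      nn_integral_mollifier_Iic_le[OF assms(3)]
    by (intro set_integral_conv_meas_le integrable_real_indicator)
       (auto simp: finite_measure.emeasure_finite less_top[symmetric])
  then show ?thesis using sets_eq_imp_space_eq[OF assms(2)] by simp
qed

lemma measure_Iic_le_arctan_integral:
  fixes M :: "real measure"
  assumes sets_M: "sets M = sets borel" and "emeasure M UNIV = 1"
    and "AE x in M. x \<le> A" "0 < D"
  shows "pi / 4 * measure M {..A - D} \<le> (\<integral>x. arctan ((A - x) / D) \<partial>M)"
proof -
  have space_M: "space M = UNIV" using sets_eq_imp_space_eq[OF sets_M] by simp
  interpret finite_measure M
    using assms by (intro finite_measureI) (simp add: space_M)
  have "(\<integral>x. pi / 4 * indicator {..A - D} x \<partial>M) \<le> (\<integral>x. arctan ((A - x) / D) \<partial>M)"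
  proof (rule integral_mono_AE)
    show "integrable M (\<lambda>x. pi / 4 * indicator {..A - D} x)"
      by (intro integrable_mult_right integrable_real_indicator)
         (auto simp: sets_M emeasure_finite less_top[symmetric])
    have "(\<lambda>x. arctan ((A - x) / D)) \<in> borel_measurable M"
      unfolding measurable_cong_sets[OF sets_M refl] by measurable
    moreover have "\<bar>arctan ((A - x) / D)\<bar> \<le> pi" for x
      using arctan_bounded[of "(A - x) / D"] by linarith
    ultimately show "integrable M (\<lambda>x. arctan ((A - x) / D))"
      by (intro integrable_const_bound[where B = pi]) auto
    show "AE x in M. pi / 4 * indicator {..A - D} x \<le> arctan ((A - x) / D)"
      using \<open>AE x in M. x \<le> A\<close>
    proof eventually_elim
      case (elim x)
      show ?case
      proof (cases "x \<le> A - D")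
        case True
        then have "arctan 1 \<le> arctan ((A - x) / D)"
          using \<open>0 < D\<close> by (intro arctan_monotone') (simp add: field_simps)
        then show ?thesis using True by (simp add: arctan_one)
      qed (use elim \<open>0 < D\<close> in simp)
    qed
  qed
  then show ?thesis by (simp add: space_M)
qed

lemma conv_meas_tail_le:
  fixes M :: "real measure"
  assumes sets_M: "sets M = sets borel" and prob_M: "emeasure M UNIV = 1"
    and "AE x in M. x \<le> A" "mollifier \<kappa> \<phi>" "0 < D"
    and "0 \<le> \<omega>" "\<omega> \<le> 1" "0 \<le> \<mu>" "\<mu> \<le> 1" "0 \<le> B"
    and moment: "\<And>E. 0 < E \<Longrightarrow> (\<integral>x. arctan ((A - x) / E) \<partial>M) \<le> B / E powr \<omega>"
  shows "(LBINT x:{..A - D}. conv_meas M \<phi> x) \<le> 2 * (\<kappa> / D) powr \<mu> + 3 * B / D powr \<omega>"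
proof -
  have space_M: "space M = UNIV" using sets_eq_imp_space_eq[OF sets_M] by simp
  interpret finite_measure M
    using prob_M by (intro finite_measureI) (simp add: space_M)
  have conv_le: "(LBINT x:{..A - D}. conv_meas M \<phi> x) \<le> measure M {..A - D + \<kappa>}"
    using set_integral_conv_meas_Iic_le[OF finite_measure_axioms sets_M \<open>mollifier \<kappa> \<phi>\<close>] .
  have tail: "measure M {..A - E} \<le> 4 / pi * (B / E powr \<omega>)" if "0 < E" for E
  proof -
    have "pi / 4 * measure M {..A - E} \<le> B / E powr \<omega>"
      using measure_Iic_le_arctan_integral[OF sets_M prob_M \<open>AE x in M. x \<le> A\<close> that] moment[OF that]
      by linarith
    from mult_left_mono[OF this, of "4 / pi"] show ?thesis by simp
  qed
  show ?thesis
  proof (cases "2 * \<kappa> \<le> D")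
    case True
    have "measure M {..A - D + \<kappa>} \<le> measure M {..A - D / 2}"
      using True by (intro finite_measure_mono) (auto simp: sets_M)
    also have "\<dots> \<le> 4 / pi * (B / (D / 2) powr \<omega>)"
      using tail[of "D / 2"] \<open>0 < D\<close> by simp
    also have "\<dots> = 4 / pi * 2 powr \<omega> * (B / D powr \<omega>)"
      by (simp add: powr_divide field_simps)
    also have "\<dots> \<le> 3 * (B / D powr \<omega>)"
    proof (rule mult_right_mono)
      have "2 powr \<omega> \<le> 2 powr 1" using \<open>\<omega> \<le> 1\<close> by (intro powr_mono) auto
      then show "4 / pi * 2 powr \<omega> \<le> 3"
        using pi_gt3 by (simp add: field_simps)
    qed (use \<open>0 \<le> B\<close> in simp)
    finally show ?thesis using conv_le powr_ge_zero[of "\<kappa> / D" \<mu>] by linarith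
  next
    case False
    have "measure M {..A - D + \<kappa>} \<le> measure M (space M)"
      by (rule bounded_measure)
    also have "\<dots> = 1"
      using prob_M by (simp add: measure_def space_M)
    also have "1 \<le> 2 * (1 / 2) powr \<mu>"
      using powr_mono'[of \<mu> 1 "1 / 2"] \<open>\<mu> \<le> 1\<close> by simp
    also have "\<dots> \<le> 2 * (\<kappa> / D) powr \<mu>"
      using False \<open>0 < D\<close> \<open>0 \<le> \<mu>\<close> by (intro mult_left_mono powr_mono2) (auto simp: field_simps)
    moreover have "0 \<le> 3 * B / D powr \<omega>" using \<open>0 \<le> B\<close> by simp
    ultimately show ?thesis using conv_le by linarith
  qed
qed

lemma conv_meas_moment_le:
  fixes M :: "real measure"
  assumes sets_M: "sets M = sets borel" and prob_M: "emeasure M UNIV = 1"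
    and "AE x in M. x \<le> A" "mollifier \<kappa> \<phi>" "0 < \<kappa>" "\<kappa> < 1"
  shows "(LBINT x:{A - 2..A}. \<bar>x - A\<bar> * conv_meas M \<phi> x) \<le> \<kappa> + 10 * (\<integral>y. arctan (A - y) \<partial>M)"
proof -
  have space_M: "space M = UNIV" using sets_eq_imp_space_eq[OF sets_M] by simp
  interpret finite_measure M
    using prob_M by (intro finite_measureI) (simp add: space_M)
  have integrable_arctan: "integrable M (\<lambda>y. arctan (A - y))"
  proof (intro integrable_const_bound[where B = pi])
    show "(\<lambda>y. arctan (A - y)) \<in> borel_measurable M"
      unfolding measurable_cong_sets[OF sets_M refl] by measurable
    have "\<bar>arctan (A - y)\<bar> \<le> pi" for y
      using arctan_bounded[of "A - y"] by linarith
    then show "AE y in M. norm (arctan (A - y)) \<le> pi" by simp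
  qed
  have "(LBINT x:{A - 2..A}. \<bar>x - A\<bar> * conv_meas M \<phi> x) \<le> (\<integral>y. \<kappa> + 10 * arctan (A - y) \<partial>M)"
    using \<open>AE x in M. x \<le> A\<close> mollifier_borel_measurable[OF \<open>mollifier \<kappa> \<phi>\<close>]
      mollifier_nonneg[OF \<open>mollifier \<kappa> \<phi>\<close>] integrable_arctan \<open>0 < \<kappa>\<close>
      nn_integral_mollifier_moment_le[OF \<open>mollifier \<kappa> \<phi>\<close> \<open>0 < \<kappa>\<close> \<open>\<kappa> < 1\<close>]
    by (intro set_integral_conv_meas_le) (auto simp: sets_M finite_measure_axioms elim!: eventually_mono)
  also have "\<dots> = \<kappa> + 10 * (\<integral>y. arctan (A - y) \<partial>M)"
    using integrable_arctan prob_M by (simp add: measure_def space_M)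
  finally show ?thesis .
qed

lemma conv_meas_estimates:
  fixes f :: "real \<Rightarrow> real measure"
  assumes "0 < \<omega>" "\<omega> < 1" "0 < \<mu>" "\<mu> < 1" and K_def: "K = 1 / (1 - \<omega>) + pi / \<omega>"
    and "0 < P" "0 < \<kappa>" "\<kappa> < 1" "mollifier \<kappa> \<phi>" "t \<in> {0..T}"
    and sets_f: "\<And>s. s \<in> {0..T} \<Longrightarrow> sets (f s) = sets borel"
    and prob_f: "\<And>s. s \<in> {0..T} \<Longrightarrow> emeasure (f s) UNIV = 1"
    and support: "emeasure (f t) {A<..} = 0"
    and weak: "\<And>\<psi> s. Cb1 \<psi> \<Longrightarrow> s \<in> {0..T} \<Longrightarrow>
      (\<integral>x. \<psi> x \<partial>f s) = \<psi> A +
        (LBINT r=0..s. (\<integral>x. (LBINT y:{0<..}. P / y powr (1 + \<omega>) * (\<psi> (x - y) - \<psi> x)) \<partial>f r))"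
  shows "\<forall>D>0. (LBINT x:{..A - D}. conv_meas (f t) \<phi> x)
            \<le> (2 + 3 * K) * (\<kappa> / D) powr \<mu> + (2 + 3 * K) * (P * t / D powr \<omega>)"
    and "(LBINT x:{A - 2..A}. \<bar>x - A\<bar> * conv_meas (f t) \<phi> x) \<le> \<kappa> powr \<mu> + 10 * K * P * t"
proof -
  have "0 < K" unfolding K_def using assms by (intro add_pos_pos divide_pos_pos) auto
  have "0 \<le> t" using \<open>t \<in> {0..T}\<close> by simp
  have sets_ft: "sets (f t) = sets borel" and prob_ft: "emeasure (f t) UNIV = 1"
    using sets_f prob_f \<open>t \<in> {0..T}\<close> by auto
  have "AE x in f t. x \<le> A"
    using support sets_eq_imp_space_eq[OF sets_ft]
    by (intro AE_I'[of "{A<..}"]) (auto simp: null_sets_def sets_ft)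
  have moment: "(\<integral>x. arctan ((A - x) / D) \<partial>f t) \<le> K * P * t / D powr \<omega>" if "0 < D" for D
    using arctan_moment_le[of \<omega> P D t T f A] assms that by (simp add: mult_ac)
  show "\<forall>D>0. (LBINT x:{..A - D}. conv_meas (f t) \<phi> x)
            \<le> (2 + 3 * K) * (\<kappa> / D) powr \<mu> + (2 + 3 * K) * (P * t / D powr \<omega>)"
  proof (intro allI impI)
    fix D :: real assume "0 < D"
    have "(LBINT x:{..A - D}. conv_meas (f t) \<phi> x) \<le> 2 * (\<kappa> / D) powr \<mu> + 3 * (K * P * t) / D powr \<omega>"
      using \<open>0 < \<omega>\<close> \<open>\<omega> < 1\<close> \<open>0 < \<mu>\<close> \<open>\<mu> < 1\<close> \<open>0 < K\<close> \<open>0 < P\<close> \<open>0 \<le> t\<close>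
      by (intro conv_meas_tail_le[OF sets_ft prob_ft \<open>AE x in f t. x \<le> A\<close> \<open>mollifier \<kappa> \<phi>\<close> \<open>0 < D\<close>])
         (simp_all add: moment)
    also have "\<dots> \<le> (2 + 3 * K) * (\<kappa> / D) powr \<mu> + (2 + 3 * K) * (P * t / D powr \<omega>)"
    proof (rule add_mono)
      have "3 * (K * P * t) / D powr \<omega> = 3 * K * (P * t / D powr \<omega>)" by simp
      also have "\<dots> \<le> (2 + 3 * K) * (P * t / D powr \<omega>)"
        using \<open>0 < P\<close> \<open>0 \<le> t\<close> by (intro mult_right_mono) auto
      finally show "3 * (K * P * t) / D powr \<omega> \<le> (2 + 3 * K) * (P * t / D powr \<omega>)" .
    qed (use \<open>0 < K\<close> in \<open>intro mult_right_mono, auto\<close>)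
    finally show "(LBINT x:{..A - D}. conv_meas (f t) \<phi> x)
        \<le> (2 + 3 * K) * (\<kappa> / D) powr \<mu> + (2 + 3 * K) * (P * t / D powr \<omega>)" .
  qed
  have "(LBINT x:{A - 2..A}. \<bar>x - A\<bar> * conv_meas (f t) \<phi> x) \<le> \<kappa> + 10 * (K * P * t)"
    using conv_meas_moment_le[OF sets_ft prob_ft \<open>AE x in f t. x \<le> A\<close> \<open>mollifier \<kappa> \<phi>\<close>
        \<open>0 < \<kappa>\<close> \<open>\<kappa> < 1\<close>] moment[of 1]
    by simp
  also have "\<dots> \<le> \<kappa> powr \<mu> + 10 * K * P * t"
    using powr_mono'[of \<mu> 1 \<kappa>] \<open>0 < \<kappa>\<close> \<open>\<kappa> < 1\<close> \<open>\<mu> < 1\<close> by simp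
  finally show "(LBINT x:{A - 2..A}. \<bar>x - A\<bar> * conv_meas (f t) \<phi> x) \<le> \<kappa> powr \<mu> + 10 * K * P * t" .
qed

theorem lemmaB10:
  fixes \<omega> \<mu> :: real
  assumes "0 < \<omega>" "\<omega> < 1" "0 < \<mu>" "\<mu> < 1"
  shows "\<exists>C C\<^sub>\<mu> C\<^sub>\<omega> :: real.
    \<forall>(P::real) (A::real) (\<kappa>::real) (T::real) (f :: real \<Rightarrow> real measure) (\<phi> :: real \<Rightarrow> real).
      0 < P \<longrightarrow> 0 < \<kappa> \<longrightarrow> \<kappa> < 1 \<longrightarrow> 0 < T \<longrightarrow> mollifier \<kappa> \<phi> \<longrightarrow>
      (\<forall>t\<in>{0..T}. sets (f t) = sets borel \<and> finite_measure (f t)) \<longrightarrow>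
      (\<forall>\<psi>. Cb \<psi> \<longrightarrow> continuous_on {0..T} (\<lambda>t. \<integral>x. \<psi> x \<partial>(f t))) \<longrightarrow>
      (\<forall>\<psi>. Cb1 \<psi> \<longrightarrow> (\<forall>t\<in>{0..T}.
          (\<integral>x. \<psi> x \<partial>(f t)) = \<psi> A +
            (LBINT s=0..t. (\<integral>x. (LBINT y:{0<..}. P / y powr (1 + \<omega>) * (\<psi> (x - y) - \<psi> x)) \<partial>(f s))))) \<longrightarrow>
      (\<forall>t\<in>{0..T}. emeasure (f t) {A<..} = 0 \<and> emeasure (f t) UNIV = 1) \<longrightarrow>
      (\<forall>t\<in>{0..T}.
         (\<forall>D>0. (LBINT x:{..A - D}. conv_meas (f t) \<phi> x)
                  \<le> C * (\<kappa> / D) powr \<mu> + C * (P * t / D powr \<omega>))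
       \<and> (LBINT x:{A - 2..A}. \<bar>x - A\<bar> * conv_meas (f t) \<phi> x)
                  \<le> C\<^sub>\<mu> * \<kappa> powr \<mu> + C\<^sub>\<omega> * P * t)"
proof -
  define K where "K = 1 / (1 - \<omega>) + pi / \<omega>"
  note estimates = conv_meas_estimates[OF assms K_def]
  show ?thesis
    by (rule exI[of _ "2 + 3 * K"], rule exI[of _ 1], rule exI[of _ "10 * K"],
        intro allI impI ballI, unfold mult_1, intro conjI estimates) blast+
qed

end
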